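(* In the standing setting, if a robust $\boldsymbol b$-flow exists, then there exists an optimal robust $\boldsymbol b$-flow $\boldsymbol f=(f^1,f^2)$ with $f^2(a)\ge f^1(a)$ for all arcs $a\in A$.
   Context: A RobMCF instance $(G,u,c,\boldsymbol b)$ consists of a finite directed graph (parallel arcs allowed) $G=(V,A)$ whose arc set is partitioned as $A=A^{\mathrm{fix}}\cup A^{\mathrm{free}}$ into fixed and free arcs, capacities $u:A\to\mathbb Z_{\ge0}$, costs $c:A\to\mathbb Z_{\ge0}$, a finite nonempty set of scenarios $\Lambda$, and balances $b^\lambda:V\to\mathbb Z$ with $\sum_{v}b^\lambda(v)=0$. A $b^\lambda$-flow is a function $f^\lambda:A\to\mathbb Z_{\ge0}$ with $f^\lambda(a)\le u(a)$ for all $a$ and $\sum_{a=(v,w)\in A}f^\lambda(a)-\sum_{a=(w,v)\in A}f^\lambda(a)=b^\lambda(v)$ for all $v\in V$; its cost is $c(f^\lambda)=\sum_a c(a)f^\lambda(a)$. A robust $\boldsymbol b$-flow is a tuple $(f^\lambda)_{\lambda\in\Lambda}$ of $b^\lambda$-flows with $f^\lambda(a)=f^{\lambda'}(a)$ for all $a\in A^{\mathrm{fix}}$, $\lambda,\lambda'\in\Lambda$; its cost is $\max_\lambda c(f^\lambda)$; it is optimal if of minimum cost. Series-parallel (SP) digraphs are defined recursively: a single arc $(o,q)$ is an SP digraph with origin $o$ and target $q$; if $G_1$ (origin $o_1$, target $q_1$) and $G_2$ (origin $o_2$, target $q_2$) are SP digraphs, then their series composition (identify $q_1$ with $o_2$;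 origin $o_1$, target $q_2$) and their parallel composition (identify $o_1$ with $o_2$ to form the origin and $q_1$ with $q_2$ to form the target) are SP digraphs. Standing setting: $G$ is an SP digraph with origin $o$ and target $q$, $\Lambda=\{1,2\}$, and there are integers $0\le d^1\le d^2$ with $b^\lambda(o)=d^\lambda$, $b^\lambda(q)=-d^\lambda$ and $b^\lambda(v)=0$ for all other $v$ (unique source $o$, unique sink $q$). *)

theory Defs
  imports Main
begin

text \<open>A digraph with parallel arcs: a set of arc identifiers A (type 'e) with
tail and head maps into vertices (type 'v). The vertex set of an SP digraph is
the set of arc endpoints (SP digraphs have no isolated vertices).\<close>

definition verts :: "'e set \<Rightarrow> ('e \<Rightarrow> 'v) \<Rightarrow> ('e \<Rightarrow> 'v) \<Rightarrow> 'v set" where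
  "verts A tail head = tail ` A \<union> head ` A"

text \<open>Series-parallel digraphs with origin s and target t, built by gluing:
identification of vertices is realised by sharing vertex names, and the
components are otherwise vertex- and arc-disjoint.\<close>

inductive sp :: "('e \<Rightarrow> 'v) \<Rightarrow> ('e \<Rightarrow> 'v) \<Rightarrow> 'e set \<Rightarrow> 'v \<Rightarrow> 'v \<Rightarrow> bool"
  for tail :: "'e \<Rightarrow> 'v" and head :: "'e \<Rightarrow> 'v" where
  single: "tail a = s \<Longrightarrow> head a = t \<Longrightarrow> s \<noteq> t \<Longrightarrow> sp tail head {a} s t"
| series: "sp tail head A1 s m \<Longrightarrow> sp tail head A2 m t \<Longrightarrow> A1 \<inter> A2 = {} \<Longrightarrow>
     verts A1 tail head \<inter> verts A2 tail head = {m} \<Longrightarrow> sp tail head (A1 \<union> A2) s t"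
| parallel: "sp tail head A1 s t \<Longrightarrow> sp tail head A2 s t \<Longrightarrow> A1 \<inter> A2 = {} \<Longrightarrow>
     verts A1 tail head \<inter> verts A2 tail head = {s, t} \<Longrightarrow> sp tail head (A1 \<union> A2) s t"

definition is_flow :: "'e set \<Rightarrow> ('e \<Rightarrow> 'v) \<Rightarrow> ('e \<Rightarrow> 'v) \<Rightarrow> ('e \<Rightarrow> nat) \<Rightarrow>
    ('v \<Rightarrow> int) \<Rightarrow> ('e \<Rightarrow> nat) \<Rightarrow> bool" where
  "is_flow A tail head u b f \<longleftrightarrow>
     (\<forall>a\<in>A. f a \<le> u a) \<and>
     (\<forall>v\<in>verts A tail head.
        (\<Sum>a\<in>{a\<in>A. tail a = v}. int (f a)) - (\<Sum>a\<in>{a\<in>A. head a = v}. int (f a)) = b v)"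

definition flow_cost :: "'e set \<Rightarrow> ('e \<Rightarrow> nat) \<Rightarrow> ('e \<Rightarrow> nat) \<Rightarrow> nat" where
  "flow_cost A c f = (\<Sum>a\<in>A. c a * f a)"

definition robust_flow :: "'e set \<Rightarrow> 'e set \<Rightarrow> ('e \<Rightarrow> 'v) \<Rightarrow> ('e \<Rightarrow> 'v) \<Rightarrow> ('e \<Rightarrow> nat) \<Rightarrow>
    ('v \<Rightarrow> int) \<Rightarrow> ('v \<Rightarrow> int) \<Rightarrow> ('e \<Rightarrow> nat) \<Rightarrow> ('e \<Rightarrow> nat) \<Rightarrow> bool" where
  "robust_flow A Afix tail head u b1 b2 f1 f2 \<longleftrightarrow>
     is_flow A tail head u b1 f1 \<and> is_flow A tail head u b2 f2 \<and> (\<forall>a\<in>Afix. f1 a = f2 a)"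

definition robust_cost :: "'e set \<Rightarrow> ('e \<Rightarrow> nat) \<Rightarrow> ('e \<Rightarrow> nat) \<Rightarrow> ('e \<Rightarrow> nat) \<Rightarrow> nat" where
  "robust_cost A c f1 f2 = max (flow_cost A c f1) (flow_cost A c f2)"

definition optimal_robust_flow :: "'e set \<Rightarrow> 'e set \<Rightarrow> ('e \<Rightarrow> 'v) \<Rightarrow> ('e \<Rightarrow> 'v) \<Rightarrow>
    ('e \<Rightarrow> nat) \<Rightarrow> ('e \<Rightarrow> nat) \<Rightarrow> ('v \<Rightarrow> int) \<Rightarrow> ('v \<Rightarrow> int) \<Rightarrow> ('e \<Rightarrow> nat) \<Rightarrow> ('e \<Rightarrow> nat) \<Rightarrow> bool" where
  "optimal_robust_flow A Afix tail head u c b1 b2 f1 f2 \<longleftrightarrow>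
     robust_flow A Afix tail head u b1 b2 f1 f2 \<and>
     (\<forall>g1 g2. robust_flow A Afix tail head u b1 b2 g1 g2 \<longrightarrow>
        robust_cost A c f1 f2 \<le> robust_cost A c g1 g2)"

definition st_balance :: "'v \<Rightarrow> 'v \<Rightarrow> nat \<Rightarrow> 'v \<Rightarrow> int" where
  "st_balance s t d v = (if v = s then int d else if v = t then - int d else 0)"

end

theory Submission
  imports Defs "HOL-Library.Indicator_Function"
begin

text \<open>Start from an optimal robust flow (f1, f2). If f2 a < f1 a on some arc, the
series-parallel structure yields an exchange cycle: at some parallel composition the d1-flow
sends more than the d2-flow into one branch, hence (as d1 \<le> d2) less into the other, and
unit paths through the two branches along arcs with f2 < f1, resp. f1 < f2, close up to a
cycle. Shifting one unit of f1 around it, or one unit of f2 the opposite way, whichever is not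
more expensive, keeps both balances and keeps every arc value between f1 a and f2 a, hence
within capacity and equal on fixed arcs. The total difference between f1 and f2 drops, so
iterating ends at flows with f1 \<le> f2 and no larger cost.\<close>

definition pointwise_between :: "'e set \<Rightarrow> ('e \<Rightarrow> nat) \<Rightarrow> ('e \<Rightarrow> nat) \<Rightarrow> ('e \<Rightarrow> nat) \<Rightarrow> bool" where
  "pointwise_between A f1 f2 g \<longleftrightarrow> (\<forall>a\<in>A. min (f1 a) (f2 a) \<le> g a \<and> g a \<le> max (f1 a) (f2 a))"

definition flow_distance :: "'e set \<Rightarrow> ('e \<Rightarrow> nat) \<Rightarrow> ('e \<Rightarrow> nat) \<Rightarrow> nat" where
  "flow_distance A f1 f2 = (\<Sum>a\<in>A. max (f1 a) (f2 a) - min (f1 a) (f2 a))"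

definition improves_on :: "'e set \<Rightarrow> ('e \<Rightarrow> nat) \<Rightarrow> ('e \<Rightarrow> nat) \<Rightarrow> ('e \<Rightarrow> nat) \<Rightarrow>
    ('e \<Rightarrow> nat) \<Rightarrow> ('e \<Rightarrow> nat) \<Rightarrow> bool" where
  "improves_on A c g1 g2 f1 f2 \<longleftrightarrow>
     pointwise_between A f1 f2 g1 \<and> pointwise_between A f1 f2 g2 \<and>
     flow_cost A c g1 \<le> flow_cost A c f1 \<and> flow_cost A c g2 \<le> flow_cost A c f2"

lemma flow_distance_commute: "flow_distance A f1 f2 = flow_distance A f2 f1"
  by (simp add: flow_distance_def max.commute min.commute)

lemma pointwise_between_commute: "pointwise_between A f1 f2 g = pointwise_between A f2 f1 g"
  by (simp add: pointwise_between_def max.commute min.commute)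

lemma improves_on_refl: "improves_on A c f1 f2 f1 f2"
  by (simp add: improves_on_def pointwise_between_def)

lemma improves_on_trans:
  "improves_on A c h1 h2 g1 g2 \<Longrightarrow> improves_on A c g1 g2 f1 f2 \<Longrightarrow> improves_on A c h1 h2 f1 f2"
  unfolding improves_on_def pointwise_between_def by (meson le_trans min.bounded_iff le_max_iff_disj)

lemma flow_cost_affine:
  assumes "finite A" "\<And>a. a \<in> A \<Longrightarrow> int (g a) = int (f a) + int (p a) - int (q a)"
  shows "int (flow_cost A c g) = int (flow_cost A c f) + int (flow_cost A c p) - int (flow_cost A c q)"
proof -
  have "int (c a * g a) = int (c a * f a) + int (c a * p a) - int (c a * q a)" if "a \<in> A" for a
    unfolding of_nat_mult assms(2)[OF that] by (simp add: algebra_simps)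
  then show ?thesis unfolding flow_cost_def of_nat_sum by (simp add: sum.distrib sum_subtractf)
qed

context
  fixes tail head :: "'e \<Rightarrow> 'v"
begin

definition net_outflow :: "'e set \<Rightarrow> ('e \<Rightarrow> nat) \<Rightarrow> 'v \<Rightarrow> int" where
  "net_outflow A f v = (\<Sum>a\<in>{a\<in>A. tail a = v}. int (f a)) - (\<Sum>a\<in>{a\<in>A. head a = v}. int (f a))"

lemma net_outflow_cong: "(\<And>a. a \<in> A \<Longrightarrow> f a = g a) \<Longrightarrow> net_outflow A f = net_outflow A g"
  unfolding net_outflow_def by (intro ext arg_cong2[where f="(-)"] sum.cong) auto

lemma net_outflow_zero: "(\<And>a. a \<in> A \<Longrightarrow> f a = 0) \<Longrightarrow> net_outflow A f v = 0"
  unfolding net_outflow_def by simp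

lemma net_outflow_outside_verts: "v \<notin> verts A tail head \<Longrightarrow> net_outflow A f v = 0"
proof -
  assume "v \<notin> verts A tail head"
  then have no_arcs: "{a\<in>A. tail a = v} = {}" "{a\<in>A. head a = v} = {}" by (auto simp: verts_def)
  show ?thesis unfolding net_outflow_def no_arcs by simp
qed

lemma net_outflow_union:
  assumes "finite A1" "finite A2" "A1 \<inter> A2 = {}"
  shows "net_outflow (A1 \<union> A2) f v = net_outflow A1 f v + net_outflow A2 f v"
proof -
  have "{a\<in>A1 \<union> A2. tail a = v} = {a\<in>A1. tail a = v} \<union> {a\<in>A2. tail a = v}"
    "{a\<in>A1 \<union> A2. head a = v} = {a\<in>A1. head a = v} \<union> {a\<in>A2. head a = v}" by auto
  then show ?thesis unfolding net_outflow_def using assms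
    by (simp add: sum.union_disjoint disjoint_iff)
qed

lemma net_outflow_glue:
  assumes "finite A1" "finite A2" "A1 \<inter> A2 = {}"
    and "\<forall>a\<in>A1. f a = g a" and "\<forall>a\<in>A2. f a = h a"
  shows "net_outflow (A1 \<union> A2) f v = net_outflow A1 g v + net_outflow A2 h v"
  using net_outflow_union[OF assms(1-3)] net_outflow_cong[of A1 f g] net_outflow_cong[of A2 f h] assms(4,5)
  by simp

lemma net_outflow_vanishing:
  assumes "finite B" "A \<subseteq> B" "\<forall>a\<in>B - A. f a = 0"
  shows "net_outflow B f v = net_outflow A f v"
proof -
  have "B = A \<union> (B - A)" using assms(2) by blast
  then have "net_outflow B f v = net_outflow A f v + net_outflow (B - A) f v"
    using net_outflow_union[of A "B - A"] assms(1,2) finite_subset by fastforce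
  then show ?thesis using net_outflow_zero[of "B - A" f] assms(3) by simp
qed

lemma sum_net_outflow: "finite A \<Longrightarrow> (\<Sum>v\<in>verts A tail head. net_outflow A f v) = 0"
proof -
  assume fin: "finite A"
  then have finV: "finite (verts A tail head)" by (simp add: verts_def)
  have "(\<Sum>v\<in>verts A tail head. \<Sum>a\<in>{a\<in>A. e a = v}. int (f a)) = (\<Sum>a\<in>A. int (f a))"
    if "e ` A \<subseteq> verts A tail head" for e
    using sum.group[OF fin finV that, of "\<lambda>a. int (f a)"] by (simp add: Collect_conj_eq Int_commute)
  then show ?thesis unfolding net_outflow_def sum_subtractf by (simp add: verts_def)
qed

lemma net_outflow_affine:
  assumes "finite A" "\<And>a. a \<in> A \<Longrightarrow> int (g a) = int (f a) + int (p a) - int (q a)"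
  shows "net_outflow A g v = net_outflow A f v + net_outflow A p v - net_outflow A q v"
  unfolding net_outflow_def using assms(2) by (simp add: sum.distrib sum_subtractf)

lemma st_balance_series:
  "s \<noteq> m \<Longrightarrow> m \<noteq> t \<Longrightarrow> s \<noteq> t \<Longrightarrow> st_balance s m d v + st_balance m t d v = st_balance s t d v"
  by (simp add: st_balance_def)

lemma st_balance_inject: "st_balance s t x = st_balance s t y \<Longrightarrow> x = y"
  by (drule fun_cong[of _ _ s]) (simp add: st_balance_def)

lemma st_balance_zero: "st_balance s t 0 = (\<lambda>_. 0)"
  by (simp add: st_balance_def fun_eq_iff)

lemma verts_union: "verts (A1 \<union> A2) tail head = verts A1 tail head \<union> verts A2 tail head"
  by (auto simp: verts_def)

lemma sp_terminals:
  assumes "sp tail head A s t"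
  shows "finite A \<and> s \<noteq> t \<and> s \<in> verts A tail head \<and> t \<in> verts A tail head
    \<and> (\<forall>a\<in>A. head a \<noteq> s) \<and> (\<forall>a\<in>A. tail a \<noteq> t)"
  using assms
proof induction
  case (single a s t)
  then show ?case by (simp add: verts_def)
next
  case (series A1 s m A2 t)
  have s1: "s \<in> verts A1 tail head" "s \<noteq> m" and t2: "t \<in> verts A2 tail head" "m \<noteq> t"
    using series.IH by simp_all
  have s_out: "s \<notin> verts A2 tail head"
    using s1 series.hyps(4) by (metis IntI singletonD)
  have t_out: "t \<notin> verts A1 tail head"
    using t2 series.hyps(4) by (metis IntI singletonD)
  have "\<forall>a\<in>A2. head a \<noteq> s" "\<forall>a\<in>A1. tail a \<noteq> t"
    using s_out t_out by (auto simp: verts_def)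
  moreover have "s \<noteq> t" using s1(1) t_out by blast
  ultimately show ?case using series.IH by (auto simp: verts_union)
next
  case (parallel A1 s t A2)
  then show ?case by (auto simp: verts_union)
qed

lemma is_flow_net_outflow:
  assumes "sp tail head A s t" "is_flow A tail head u (st_balance s t d) f"
  shows "net_outflow A f = st_balance s t d"
proof
  fix v
  show "net_outflow A f v = st_balance s t d v"
  proof (cases "v \<in> verts A tail head")
    case False
    then show ?thesis
      using net_outflow_outside_verts sp_terminals[OF assms(1)] by (auto simp: st_balance_def)
  qed (use assms(2) in \<open>simp add: is_flow_def net_outflow_def\<close>)
qed

lemma is_flow_same_net_outflow:
  assumes "is_flow A tail head u b f" "net_outflow A g = net_outflow A f" "\<forall>a\<in>A. g a \<le> u a"
  shows "is_flow A tail head u b g"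
proof -
  have "net_outflow A g v = b v" if "v \<in> verts A tail head" for v
    using assms(1,2) that unfolding is_flow_def net_outflow_def[symmetric] by simp
  with assms(3) show ?thesis unfolding is_flow_def net_outflow_def by blast
qed

lemma net_outflow_single_arc:
  assumes "tail a = s" "head a = t" "s \<noteq> t"
  shows "net_outflow {a} f = st_balance s t (f a)"
proof
  fix v
  have "{x\<in>{a}. tail x = v} = (if v = s then {a} else {})"
    "{x\<in>{a}. head x = v} = (if v = t then {a} else {})" using assms by auto
  then show "net_outflow {a} f v = st_balance s t (f a) v"
    unfolding net_outflow_def using assms(3) by (simp add: st_balance_def)
qed

lemma sp_net_outflow_eq_st_balance:
  assumes sp: "sp tail head A s t" and inner: "\<And>v. v \<noteq> s \<Longrightarrow> v \<noteq> t \<Longrightarrow> net_outflow A f v = 0"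
  shows "\<exists>d. net_outflow A f = st_balance s t d"
proof -
  let ?V = "verts A tail head"
  have fin: "finite A" and st: "s \<noteq> t" "s \<in> ?V" "t \<in> ?V" and no_in: "{a\<in>A. head a = s} = {}"
    using sp_terminals[OF sp] by auto
  have finV: "finite ?V" using fin by (simp add: verts_def)
  have nonneg: "net_outflow A f s \<ge> 0" unfolding net_outflow_def no_in by (simp add: sum_nonneg)
  have "0 = (\<Sum>v\<in>?V. net_outflow A f v)" using sum_net_outflow[OF fin] by simp
  also have "\<dots> = net_outflow A f s + net_outflow A f t + (\<Sum>v\<in>?V - {s} - {t}. net_outflow A f v)"
    using st finV by (simp add: sum.remove)
  also have "(\<Sum>v\<in>?V - {s} - {t}. net_outflow A f v) = 0" using inner by (intro sum.neutral) auto
  finally have "net_outflow A f t = - net_outflow A f s" by simp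
  then have "net_outflow A f = st_balance s t (nat (net_outflow A f s))"
    using nonneg inner by (auto simp: st_balance_def)
  then show ?thesis ..
qed

lemma sp_net_outflow_restrict:
  assumes sp: "sp tail head A1 s1 t1" and fin: "finite A2" and disj: "A1 \<inter> A2 = {}"
    and shared: "verts A1 tail head \<inter> verts A2 tail head \<subseteq> {s1, t1}"
    and terminals: "{s, t} \<inter> verts A1 tail head \<subseteq> {s1, t1}"
    and flow: "net_outflow (A1 \<union> A2) f = st_balance s t d"
  shows "\<exists>x. net_outflow A1 f = st_balance s1 t1 x"
proof (rule sp_net_outflow_eq_st_balance[OF sp])
  fix v assume v: "v \<noteq> s1" "v \<noteq> t1"
  show "net_outflow A1 f v = 0"
  proof (cases "v \<in> verts A1 tail head")
    case True
    then have "net_outflow A2 f v = 0" using shared v by (intro net_outflow_outside_verts) blast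
    moreover have "st_balance s t d v = 0" using True terminals v by (auto simp: st_balance_def)
    ultimately show ?thesis
      using net_outflow_union[OF _ fin disj, of f v] sp_terminals[OF sp] flow by simp
  qed (rule net_outflow_outside_verts)
qed

lemma sp_series_split:
  assumes sp1: "sp tail head A1 s m" and sp2: "sp tail head A2 m t" and disj: "A1 \<inter> A2 = {}"
    and shared: "verts A1 tail head \<inter> verts A2 tail head = {m}"
    and flow: "net_outflow (A1 \<union> A2) f = st_balance s t d"
  shows "net_outflow A1 f = st_balance s m d \<and> net_outflow A2 f = st_balance m t d"
proof -
  note T1 = sp_terminals[OF sp1] and T2 = sp_terminals[OF sp2]
  have s_out: "s \<notin> verts A2 tail head" and t_out: "t \<notin> verts A1 tail head"
    using shared T1 T2 by (metis IntI singletonD)+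
  have distinct: "s \<noteq> m" "m \<noteq> t" "s \<noteq> t" using T1 T2 t_out by auto
  have flow': "net_outflow (A2 \<union> A1) f = st_balance s t d" using flow by (simp add: Un_commute)
  obtain x where x: "net_outflow A1 f = st_balance s m x"
    using sp_net_outflow_restrict[OF sp1 _ disj _ _ flow] T2 t_out shared by blast
  obtain y where y: "net_outflow A2 f = st_balance m t y"
    using sp_net_outflow_restrict[OF sp2 _ _ _ _ flow'] T1 s_out shared disj by blast
  have split: "st_balance s t d v = st_balance s m x v + st_balance m t y v" for v
    using net_outflow_union[of A1 A2 f v] T1 T2 disj flow x y by simp
  have "x = d" using split[of s] distinct by (simp add: st_balance_def)
  moreover have "y = d" using split[of t] distinct by (simp add: st_balance_def)
  ultimately show ?thesis using x y by simp
qed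

lemma sp_parallel_split:
  assumes sp1: "sp tail head A1 s t" and sp2: "sp tail head A2 s t" and disj: "A1 \<inter> A2 = {}"
    and shared: "verts A1 tail head \<inter> verts A2 tail head = {s, t}"
    and flow: "net_outflow (A1 \<union> A2) f = st_balance s t d"
  obtains x y where "net_outflow A1 f = st_balance s t x" "net_outflow A2 f = st_balance s t y"
    "x + y = d"
proof -
  note T1 = sp_terminals[OF sp1] and T2 = sp_terminals[OF sp2]
  have flow': "net_outflow (A2 \<union> A1) f = st_balance s t d" using flow by (simp add: Un_commute)
  obtain x where x: "net_outflow A1 f = st_balance s t x"
    using sp_net_outflow_restrict[OF sp1 _ disj _ _ flow] T2 shared by blast
  obtain y where y: "net_outflow A2 f = st_balance s t y"
    using sp_net_outflow_restrict[OF sp2 _ _ _ _ flow'] T1 shared disj by blast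
  have "st_balance s t d s = st_balance s t x s + st_balance s t y s"
    using net_outflow_union[of A1 A2 f s] T1 T2 disj flow x y by simp
  then have "x + y = d" using T1 by (simp add: st_balance_def)
  with x y that show ?thesis by blast
qed

lemma sp_series_glue:
  assumes sp1: "sp tail head A1 s m" and sp2: "sp tail head A2 m t" and disj: "A1 \<inter> A2 = {}"
    and shared: "verts A1 tail head \<inter> verts A2 tail head = {m}"
    and g: "net_outflow A1 g = st_balance s m d" and h: "net_outflow A2 h = st_balance m t d"
    and "\<forall>a\<in>A1. f a = g a" "\<forall>a\<in>A2. f a = h a"
  shows "net_outflow (A1 \<union> A2) f = st_balance s t d"
proof
  fix v
  note T1 = sp_terminals[OF sp1] and T2 = sp_terminals[OF sp2]
  have "t \<notin> verts A1 tail head" using shared T2 by (metis IntI singletonD)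
  then have distinct: "s \<noteq> m" "m \<noteq> t" "s \<noteq> t" using T1 T2 by auto
  have "net_outflow (A1 \<union> A2) f v = net_outflow A1 g v + net_outflow A2 h v"
    using net_outflow_glue[of A1 A2 f g h v] assms T1 T2 by simp
  then show "net_outflow (A1 \<union> A2) f v = st_balance s t d v"
    using g h st_balance_series[OF distinct] by simp
qed

lemma net_outflow_indicator_mono:
  assumes "finite B" "A \<subseteq> B" "P \<subseteq> A"
  shows "net_outflow B (indicator P) = net_outflow A (indicator P)"
  using net_outflow_vanishing[OF assms(1,2), of "indicator P"] assms(3) by (auto simp: indicator_def)

lemma unit_flow_nonempty:
  assumes "net_outflow A (indicator P) = st_balance s t 1"
  shows "P \<noteq> {}"
proof
  assume "P = {}"
  then have "net_outflow A (indicator P) = st_balance s t 0"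
    by (simp add: st_balance_zero net_outflow_def fun_eq_iff)
  with assms show False using st_balance_inject by fastforce
qed

lemma sp_unit_path:
  assumes "sp tail head A s t"
    and "net_outflow A f1 = st_balance s t d1" "net_outflow A f2 = st_balance s t d2" "d2 < d1"
  shows "\<exists>P \<subseteq> {a\<in>A. f2 a < f1 a}. net_outflow A (indicator P) = st_balance s t 1"
  using assms
proof (induction arbitrary: d1 d2 rule: sp.induct)
  case (single a s t)
  have "f1 a = d1" "f2 a = d2"
    using single net_outflow_single_arc[OF single.hyps] st_balance_inject by metis+
  then have "{a} \<subseteq> {x\<in>{a}. f2 x < f1 x}" using single.prems(3) by simp
  moreover have "net_outflow {a} (indicator {a}) = st_balance s t 1"
    using net_outflow_single_arc[OF single.hyps] by simp
  ultimately show ?case by blast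
next
  case (series A1 s m A2 t)
  note split1 = sp_series_split[OF series.hyps(1-4) series.prems(1)]
  note split2 = sp_series_split[OF series.hyps(1-4) series.prems(2)]
  obtain P1 where P1: "P1 \<subseteq> {a\<in>A1. f2 a < f1 a}" "net_outflow A1 (indicator P1) = st_balance s m 1"
    using series.IH(1)[OF split1[THEN conjunct1] split2[THEN conjunct1] series.prems(3)] by blast
  obtain P2 where P2: "P2 \<subseteq> {a\<in>A2. f2 a < f1 a}" "net_outflow A2 (indicator P2) = st_balance m t 1"
    using series.IH(2)[OF split1[THEN conjunct2] split2[THEN conjunct2] series.prems(3)] by blast
  have "net_outflow (A1 \<union> A2) (indicator (P1 \<union> P2)) = st_balance s t 1"
    by (rule sp_series_glue[OF series.hyps(1-4) P1(2) P2(2)])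
      (use P1(1) P2(1) series.hyps(3) in \<open>auto simp: indicator_def\<close>)
  with P1(1) P2(1) show ?case by (intro exI[of _ "P1 \<union> P2"]) auto
next
  case (parallel A1 s t A2)
  have fin: "finite (A1 \<union> A2)" using sp_terminals[OF parallel.hyps(1)] sp_terminals[OF parallel.hyps(2)] by simp
  obtain x1 y1 where f1: "net_outflow A1 f1 = st_balance s t x1" "net_outflow A2 f1 = st_balance s t y1"
      "x1 + y1 = d1"
    using sp_parallel_split[OF parallel.hyps parallel.prems(1)] .
  obtain x2 y2 where f2: "net_outflow A1 f2 = st_balance s t x2" "net_outflow A2 f2 = st_balance s t y2"
      "x2 + y2 = d2"
    using sp_parallel_split[OF parallel.hyps parallel.prems(2)] .
  have "x2 < x1 \<or> y2 < y1" using f1(3) f2(3) parallel.prems(3) by linarith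
  then obtain A' P where A': "A' \<subseteq> A1 \<union> A2" and P: "P \<subseteq> {a\<in>A'. f2 a < f1 a}"
      and unit: "net_outflow A' (indicator P) = st_balance s t 1"
  proof
    assume "x2 < x1"
    with parallel.IH(1)[OF f1(1) f2(1)] that[of A1] show ?thesis by blast
  next
    assume "y2 < y1"
    with parallel.IH(2)[OF f1(2) f2(2)] that[of A2] show ?thesis by blast
  qed
  have "net_outflow (A1 \<union> A2) (indicator P) = net_outflow A' (indicator P)"
    using P by (intro net_outflow_indicator_mono[OF fin A']) blast
  with A' P unit show ?case by (intro exI[of _ P]) auto
qed

text \<open>The indicator flows of P and Q have equal balances, so P forward and Q backward form a
cycle along which f1 can be moved towards f2 and f2 towards f1.\<close>

definition exchange_cycle :: "'e set \<Rightarrow> ('e \<Rightarrow> nat) \<Rightarrow> ('e \<Rightarrow> nat) \<Rightarrow> 'e set \<Rightarrow> 'e set \<Rightarrow> bool" where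
  "exchange_cycle A f1 f2 P Q \<longleftrightarrow> P \<noteq> {} \<and> P \<subseteq> {a\<in>A. f2 a < f1 a} \<and> Q \<subseteq> {a\<in>A. f1 a < f2 a}
     \<and> net_outflow A (indicator P) = net_outflow A (indicator Q)"

lemma exchange_cycle_mono:
  assumes "finite B" "A \<subseteq> B" "exchange_cycle A f1 f2 P Q"
  shows "exchange_cycle B f1 f2 P Q"
proof -
  have "P \<subseteq> A" "Q \<subseteq> A" using assms(3) by (auto simp: exchange_cycle_def)
  then have "net_outflow B (indicator P) = net_outflow B (indicator Q)"
    using assms by (simp add: net_outflow_indicator_mono exchange_cycle_def)
  with assms(2,3) show ?thesis unfolding exchange_cycle_def by blast
qed

lemma exchange_cycle_of_branches:
  assumes "finite B" "A1 \<subseteq> B" "A2 \<subseteq> B" "sp tail head A1 s t" "sp tail head A2 s t"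
    and "net_outflow A1 f1 = st_balance s t x1" "net_outflow A1 f2 = st_balance s t x2" "x2 < x1"
    and "net_outflow A2 f1 = st_balance s t y1" "net_outflow A2 f2 = st_balance s t y2" "y1 < y2"
  shows "\<exists>P Q. exchange_cycle B f1 f2 P Q"
proof -
  obtain P where P: "P \<subseteq> {a\<in>A1. f2 a < f1 a}" "net_outflow A1 (indicator P) = st_balance s t 1"
    using sp_unit_path[OF assms(4,6-8)] by blast
  obtain Q where Q: "Q \<subseteq> {a\<in>A2. f1 a < f2 a}" "net_outflow A2 (indicator Q) = st_balance s t 1"
    using sp_unit_path[OF assms(5,10,9,11)] by blast
  have "P \<subseteq> A1" "Q \<subseteq> A2" using P(1) Q(1) by blast+
  then have "net_outflow B (indicator P) = net_outflow B (indicator Q)"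
    using net_outflow_indicator_mono[OF assms(1)] assms(2,3) P(2) Q(2) by simp
  moreover have "P \<noteq> {}" using unit_flow_nonempty[OF P(2)] .
  moreover have "P \<subseteq> {a\<in>B. f2 a < f1 a}" "Q \<subseteq> {a\<in>B. f1 a < f2 a}"
    using assms(2,3) P(1) Q(1) by blast+
  ultimately show ?thesis unfolding exchange_cycle_def by blast
qed

lemma sp_exchange_cycle:
  assumes "sp tail head A s t"
    and "net_outflow A f1 = st_balance s t d1" "net_outflow A f2 = st_balance s t d2" "d1 \<le> d2"
    and "a \<in> A" "f2 a < f1 a"
  shows "\<exists>P Q. exchange_cycle A f1 f2 P Q"
  using assms
proof (induction arbitrary: d1 d2 rule: sp.induct)
  case (single b s t)
  then have "f1 b = d1" "f2 b = d2"
    using net_outflow_single_arc[OF single.hyps] st_balance_inject by metis+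
  then show ?case using single.prems by simp
next
  case (series A1 s m A2 t)
  have fin: "finite (A1 \<union> A2)" using sp_terminals[OF series.hyps(1)] sp_terminals[OF series.hyps(2)] by simp
  note split1 = sp_series_split[OF series.hyps(1-4) series.prems(1)]
  note split2 = sp_series_split[OF series.hyps(1-4) series.prems(2)]
  have "\<exists>P Q. exchange_cycle A1 f1 f2 P Q" if "a \<in> A1"
    using series.IH(1)[OF split1[THEN conjunct1] split2[THEN conjunct1] series.prems(3) that
        series.prems(5)] .
  moreover have "\<exists>P Q. exchange_cycle A2 f1 f2 P Q" if "a \<in> A2"
    using series.IH(2)[OF split1[THEN conjunct2] split2[THEN conjunct2] series.prems(3) that
        series.prems(5)] .
  ultimately show ?case using exchange_cycle_mono[OF fin] series.prems(4) by blast
next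
  case (parallel A1 s t A2)
  have fin: "finite (A1 \<union> A2)" using sp_terminals[OF parallel.hyps(1)] sp_terminals[OF parallel.hyps(2)] by simp
  obtain x1 y1 where f1: "net_outflow A1 f1 = st_balance s t x1" "net_outflow A2 f1 = st_balance s t y1"
      "x1 + y1 = d1"
    using sp_parallel_split[OF parallel.hyps parallel.prems(1)] .
  obtain x2 y2 where f2: "net_outflow A1 f2 = st_balance s t x2" "net_outflow A2 f2 = st_balance s t y2"
      "x2 + y2 = d2"
    using sp_parallel_split[OF parallel.hyps parallel.prems(2)] .
  consider "x2 < x1" "y1 < y2" | "y2 < y1" "x1 < x2" | "x1 \<le> x2" "y1 \<le> y2"
    using f1(3) f2(3) parallel.prems(3) by linarith
  then show ?case
  proof cases
    case 1
    show ?thesis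
      using exchange_cycle_of_branches[OF fin Un_upper1 Un_upper2 parallel.hyps(1,2)
          f1(1) f2(1) 1(1) f1(2) f2(2) 1(2)] .
  next
    case 2
    show ?thesis
      using exchange_cycle_of_branches[OF fin Un_upper2 Un_upper1 parallel.hyps(2,1)
          f1(2) f2(2) 2(1) f1(1) f2(1) 2(2)] .
  next
    case 3
    have "\<exists>P Q. exchange_cycle A1 f1 f2 P Q" if "a \<in> A1"
      using parallel.IH(1)[OF f1(1) f2(1) 3(1) that parallel.prems(5)] .
    moreover have "\<exists>P Q. exchange_cycle A2 f1 f2 P Q" if "a \<in> A2"
      using parallel.IH(2)[OF f1(2) f2(2) 3(2) that parallel.prems(5)] .
    ultimately show ?thesis using exchange_cycle_mono[OF fin] parallel.prems(4) by blast
  qed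
qed

lemma exchange_shift:
  assumes fin: "finite A" and cycle: "net_outflow A (indicator P) = net_outflow A (indicator Q)"
    and P: "P \<subseteq> {a\<in>A. h a < f a}" and Q: "Q \<subseteq> {a\<in>A. f a < h a}" and nonempty: "P \<union> Q \<noteq> {}"
  defines "g \<equiv> \<lambda>a. f a + indicator Q a - indicator P a"
  shows "net_outflow A g = net_outflow A f" and "pointwise_between A f h g"
    and "flow_distance A g h < flow_distance A f h"
    and "int (flow_cost A c g) =
      int (flow_cost A c f) + int (flow_cost A c (indicator Q)) - int (flow_cost A c (indicator P))"
proof -
  have disjoint: "P \<inter> Q = {}" using P Q by (blast dest: less_asym)
  have g_int: "int (g a) = int (f a) + int (indicator Q a) - int (indicator P a)" if "a \<in> A" for a
    using P Q by (auto simp: g_def indicator_def)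
  show "net_outflow A g = net_outflow A f"
    using net_outflow_affine[OF fin g_int] cycle by (simp add: fun_eq_iff)
  show "int (flow_cost A c g) =
      int (flow_cost A c f) + int (flow_cost A c (indicator Q)) - int (flow_cost A c (indicator P))"
    using flow_cost_affine[OF fin g_int] .
  have arc: "min (f a) (h a) \<le> g a \<and> g a \<le> max (f a) (h a)
      \<and> max (g a) (h a) - min (g a) (h a) \<le> max (f a) (h a) - min (f a) (h a)
      \<and> (a \<in> P \<union> Q \<longrightarrow> max (g a) (h a) - min (g a) (h a) < max (f a) (h a) - min (f a) (h a))"
    if "a \<in> A" for a
    using P Q disjoint by (cases "a \<in> P"; cases "a \<in> Q") (auto simp: g_def indicator_def)
  then show "pointwise_between A f h g" by (simp add: pointwise_between_def)
  obtain a where "a \<in> P \<union> Q" using nonempty by blast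
  moreover have "P \<union> Q \<subseteq> A" using P Q by blast
  ultimately show "flow_distance A g h < flow_distance A f h"
    unfolding flow_distance_def using arc by (intro sum_strict_mono_ex1[OF fin]) blast+
qed

lemma exchange_step:
  assumes fin: "finite A" and cycle: "exchange_cycle A f1 f2 P Q"
  obtains g1 g2 where "net_outflow A g1 = net_outflow A f1" "net_outflow A g2 = net_outflow A f2"
    "improves_on A c g1 g2 f1 f2" "flow_distance A g1 g2 < flow_distance A f1 f2"
proof (cases "flow_cost A c (indicator Q) \<le> flow_cost A c (indicator P)")
  case True
  note shift = exchange_shift(1-3)[where P=P and Q=Q and f=f1 and h=f2, OF fin]
    exchange_shift(4)[where P=P and Q=Q and f=f1 and h=f2 and c=c, OF fin]
  let ?g = "\<lambda>a. f1 a + indicator Q a - indicator P a"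
  have "net_outflow A ?g = net_outflow A f1" "pointwise_between A f1 f2 ?g"
    "flow_distance A ?g f2 < flow_distance A f1 f2" "flow_cost A c ?g \<le> flow_cost A c f1"
    using shift cycle True unfolding exchange_cycle_def by fastforce+
  then show ?thesis
    using that[of ?g f2] improves_on_refl[of A c f1 f2] by (auto simp: improves_on_def)
next
  case False
  note shift = exchange_shift(1-3)[where P=Q and Q=P and f=f2 and h=f1, OF fin]
    exchange_shift(4)[where P=Q and Q=P and f=f2 and h=f1 and c=c, OF fin]
  let ?g = "\<lambda>a. f2 a + indicator P a - indicator Q a"
  have "net_outflow A ?g = net_outflow A f2" "pointwise_between A f1 f2 ?g"
    "flow_distance A f1 ?g < flow_distance A f1 f2" "flow_cost A c ?g \<le> flow_cost A c f2"
    using shift cycle False unfolding exchange_cycle_def pointwise_between_commute[of A f1]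
      flow_distance_commute[of A f1] by fastforce+
  then show ?thesis
    using that[of f1 ?g] improves_on_refl[of A c f1 f2] by (auto simp: improves_on_def)
qed

lemma sp_monotone_improvement:
  assumes sp: "sp tail head A s t" and d: "d1 \<le> d2"
  shows "net_outflow A f1 = st_balance s t d1 \<Longrightarrow> net_outflow A f2 = st_balance s t d2 \<Longrightarrow>
    \<exists>g1 g2. net_outflow A g1 = st_balance s t d1 \<and> net_outflow A g2 = st_balance s t d2 \<and>
      (\<forall>a\<in>A. g1 a \<le> g2 a) \<and> improves_on A c g1 g2 f1 f2"
proof (induction "flow_distance A f1 f2" arbitrary: f1 f2 rule: less_induct)
  case less
  show ?case
  proof (cases "\<forall>a\<in>A. f1 a \<le> f2 a")
    case True
    then show ?thesis using less.prems improves_on_refl by blast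
  next
    case False
    then obtain a where "a \<in> A" "f2 a < f1 a" by (auto simp: not_le)
    then obtain P Q where "exchange_cycle A f1 f2 P Q"
      using sp_exchange_cycle[OF sp less.prems d] by blast
    then obtain h1 h2 where h: "net_outflow A h1 = net_outflow A f1" "net_outflow A h2 = net_outflow A f2"
        "improves_on A c h1 h2 f1 f2" "flow_distance A h1 h2 < flow_distance A f1 f2"
      using exchange_step sp_terminals[OF sp] by metis
    then obtain g1 g2 where "net_outflow A g1 = st_balance s t d1" "net_outflow A g2 = st_balance s t d2"
        "\<forall>a\<in>A. g1 a \<le> g2 a" "improves_on A c g1 g2 h1 h2"
      using less.hyps[OF h(4)] less.prems by metis
    with h(3) show ?thesis using improves_on_trans by blast
  qed
qed

lemma robust_flow_improves_on:
  assumes robust: "robust_flow A Afix tail head u b1 b2 f1 f2" and fixed: "Afix \<subseteq> A"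
    and net1: "net_outflow A g1 = net_outflow A f1" and net2: "net_outflow A g2 = net_outflow A f2"
    and improves: "improves_on A c g1 g2 f1 f2"
  shows "robust_flow A Afix tail head u b1 b2 g1 g2 \<and> robust_cost A c g1 g2 \<le> robust_cost A c f1 f2"
proof -
  have flows: "is_flow A tail head u b1 f1" "is_flow A tail head u b2 f2"
    and same: "\<forall>a\<in>Afix. f1 a = f2 a" using robust by (simp_all add: robust_flow_def)
  have g1: "min (f1 a) (f2 a) \<le> g1 a \<and> g1 a \<le> max (f1 a) (f2 a)"
    and g2: "min (f1 a) (f2 a) \<le> g2 a \<and> g2 a \<le> max (f1 a) (f2 a)" if "a \<in> A" for a
    using improves that by (simp_all add: improves_on_def pointwise_between_def)
  have cap: "f1 a \<le> u a" "f2 a \<le> u a" if "a \<in> A" for a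
    using flows that by (simp_all add: is_flow_def)
  have "is_flow A tail head u b1 g1" "is_flow A tail head u b2 g2"
    using is_flow_same_net_outflow[OF flows(1) net1] is_flow_same_net_outflow[OF flows(2) net2]
      g1 g2 cap by (meson le_trans max.boundedI)+
  moreover have "g1 a = g2 a" if "a \<in> Afix" for a
    using g1[of a] g2[of a] same that fixed by auto
  moreover have "robust_cost A c g1 g2 \<le> robust_cost A c f1 f2"
    using improves by (auto simp: improves_on_def robust_cost_def le_max_iff_disj)
  ultimately show ?thesis by (simp add: robust_flow_def)
qed

end

lemma optimal_robust_flow_exists:
  assumes "robust_flow A Afix tail head u b1 b2 f1 f2"
  obtains g1 g2 where "optimal_robust_flow A Afix tail head u c b1 b2 g1 g2"
proof -
  let ?robust = "\<lambda>g. robust_flow A Afix tail head u b1 b2 (fst g) (snd g)"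
  obtain g where "?robust g" "\<forall>h. ?robust h \<longrightarrow> robust_cost A c (fst g) (snd g) \<le> robust_cost A c (fst h) (snd h)"
    using ex_has_least_nat[of ?robust "(f1, f2)" "\<lambda>g. robust_cost A c (fst g) (snd g)"] assms by auto
  then have "optimal_robust_flow A Afix tail head u c b1 b2 (fst g) (snd g)"
    unfolding optimal_robust_flow_def by (metis fst_conv snd_conv)
  then show thesis by (rule that)
qed

theorem mainTheorem16:
  fixes A Afix :: "'e set" and tail head :: "'e \<Rightarrow> 'v" and s t :: 'v
    and u c :: "'e \<Rightarrow> nat" and d1 d2 :: nat
  assumes "sp tail head A s t"
    and "Afix \<subseteq> A"
    and "d1 \<le> d2"
    and "\<exists>f1 f2. robust_flow A Afix tail head u (st_balance s t d1) (st_balance s t d2) f1 f2"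
  shows "\<exists>f1 f2. optimal_robust_flow A Afix tail head u c (st_balance s t d1) (st_balance s t d2) f1 f2
                \<and> (\<forall>a\<in>A. f1 a \<le> f2 a)"
proof -
  obtain f1 f2 where opt: "optimal_robust_flow A Afix tail head u c (st_balance s t d1) (st_balance s t d2) f1 f2"
    using assms(4) optimal_robust_flow_exists by metis
  then have robust: "robust_flow A Afix tail head u (st_balance s t d1) (st_balance s t d2) f1 f2"
    by (simp add: optimal_robust_flow_def)
  then have "net_outflow tail head A f1 = st_balance s t d1" "net_outflow tail head A f2 = st_balance s t d2"
    using is_flow_net_outflow[OF assms(1)] by (auto simp: robust_flow_def)
  then obtain g1 g2 where g: "net_outflow tail head A g1 = net_outflow tail head A f1"
      "net_outflow tail head A g2 = net_outflow tail head A f2"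
      "\<forall>a\<in>A. g1 a \<le> g2 a" "improves_on A c g1 g2 f1 f2"
    using sp_monotone_improvement[OF assms(1,3)] by metis
  then have "robust_flow A Afix tail head u (st_balance s t d1) (st_balance s t d2) g1 g2"
      "robust_cost A c g1 g2 \<le> robust_cost A c f1 f2"
    using robust_flow_improves_on[OF robust assms(2)] by blast+
  with opt have "optimal_robust_flow A Afix tail head u c (st_balance s t d1) (st_balance s t d2) g1 g2"
    unfolding optimal_robust_flow_def using order_trans by blast
  with g(3) show ?thesis by blast
qed

end
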